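(* Assume $t_\infty<\infty$. Fix $\theta_0\in(e^{-\tau_{\min}},e^{-\tau_{\min}/2})$ and define $$s_*(t):=\frac{t\,|P'_{*,-}(t)|}{|P'_{*,-}(t)|+(\log\theta_0)/2},\qquad t\in(0,t_\infty).$$ Then there exists $t_*\in(0,t_\infty)$ such that $s_*:=s_*(t_* )>t_\infty$.
   Context: Setting: $Q=\mathbb{T}^2\setminus\bigcup_i\mathcal{O}_i$ is a Sinai billiard table (finitely many pairwise disjoint convex closed domains $\mathcal{O}_i$ in the two-torus with $C^3$ boundaries of strictly positive curvature $\mathcal{K}$) with finite horizon (no trajectory makes only tangential collisions). $T:M\to M$, $M=\partial Q\times[-\pi/2,\pi/2]$ (coordinates $(r,\varphi)$), is the billiard map, $\tau(x)$ the free flight time from $x$ to $T(x)$, $\tau_{\min}=\inf\tau>0$, $\tau_{\max}=\sup\tau<\infty$, $\mathcal{K}_{\min}=\inf\mathcal{K}$, $\Lambda=1+2\tau_{\min}\mathcal{K}_{\min}$, $\Sigma_n\tau=\sum_{k=0}^{n-1}\tau\circ T^k$. $\mathcal{S}_0=\{\varphi=\pm\pi/2\}$ and for $n\in\mathbb{Z}\setminus\{0\}$, $\mathcal{S}_n=\bigcup T^i\mathcal{S}_0$ over integers $i$ between $0$ and $-n$ inclusive. For $n\ge1$, $\mathcal{M}_0^n$ is the set of maximal connected components of $M\setminus\mathcal{S}_n$, $Q_n(t)=\sum_{A\in\mathcal{M}_0^n}\sup_Ae^{-t\Sigma_n\tau}$ and $P_*(t)=\lim_n\frac1n\log Q_n(t)$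 for $t\ge0$. For $t>0$, $P'_{*,-}(t)=\lim_{s\uparrow t}\frac{P_*(t)-P_*(s)}{t-s}$ (it exists and lies in $[-\tau_{\max},-\tau_{\min}]$). Hyperbolicity: there are continuous stable and unstable cone families $\mathcal{C}^s,\mathcal{C}^u$ (constant on $M$) and $C_1\in(0,1)$ with $\|DT^n(x)v\|\ge C_1\Lambda^n\|v\|$ for $v\in\mathcal{C}^u$ and $\|DT^{-n}(x)v\|\ge C_1\Lambda^n\|v\|$ for $v\in\mathcal{C}^s$. $K\ge1$ is a constant such that for all $n\ge0$ the number of curves of $\mathcal{S}_{\pm n}$ meeting at a single point is at most $Kn$. $\delta_0\in(0,1/C_1)$ is a fixed length scale such that, for a fixed integer $m\ge1$, every stable curve of length at most $\delta_0$ is cut by $\mathcal{S}_{-\ell}$ into at most $K\ell+1$ components for $0\le\ell\le2m$. Curves: $\widehat{\mathcal{W}}^s$ is the set of curves with tangent vectors in $\mathcal{C}^s$, length at most $\delta_0$ and curvature at most a constant $C_{\mathcal{K}}$ chosen so that $T^{-1}\widehat{\mathcal{W}}^s\subset\widehat{\mathcal{W}}^s$ up to subdivision. Length scales have the form $\delta=\delta_0/2^N$. For $W\in\widehat{\mathcal{W}}^s$: $\mathcal{G}_0^\delta(W)=\{W\}$, and $\mathcal{G}_n^\delta(W)$ is the set of smooth components of $T^{-1}W'$, $W'\in\mathcal{G}_{n-1}^\delta(W)$, where each component of length $\ell\delta+\rho$ ($\ell\ge1$, $0\le\rho<\delta$) is subdivided: if $\rho=0$ into $\ell$ pieces of length $\delta$;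 if $\rho\ge\delta/2$ into $\ell$ pieces of length $\delta$ and one of length $\rho$ at an end; if $0<\rho<\delta/2$ into $\ell-1$ pieces of length $\delta$, one of length $\delta/2$ at one end and one of length $\rho+\delta/2$ at the other end. $L_n^\delta(W)$: elements of $\mathcal{G}_n^\delta(W)$ of length $\ge\delta/3$; $S_n^\delta(W)=\mathcal{G}_n^\delta(W)\setminus L_n^\delta(W)$. For $t\ge0$, $\mathcal{G}_n^\delta(W,t)$, $L_n^\delta(W,t)$, $S_n^\delta(W,t)$ denote $\sum\sup_{W_i}e^{-t\Sigma_n\tau}$ over $W_i$ in $\mathcal{G}_n^\delta(W)$, $L_n^\delta(W)$, $S_n^\delta(W)$ respectively. Time reversal: replace $T$ by $T^{-1}$, $\widehat{\mathcal{W}}^s$ by the analogous class $\widehat{\mathcal{W}}^u$ of unstable curves, and $\Sigma_n\tau$ by $\sum_{i=1}^n\tau\circ T^{-i}$. Small Singular Pressure (SSP): fix $\delta_1=\delta_0/2^{N_1}<\delta_0$ and $n_1\ge m$ such that $\#L_n^{\delta_1}(W)\ge\frac23\#\mathcal{G}_n^{\delta_1}(W)$ for every stable curve $W$ with $|W|\ge\delta_1/3$ and $n\ge n_1$. SSP.1 holds at $t\ge0$ if there exist $\delta_t=\delta_0/2^{N_t}\in(0,\delta_1]$ and finite $n_t\ge n_1$ such that (a) $S_n^{\delta_t}(W,t)/\mathcal{G}_n^{\delta_t}(W,t)\le1/4$ for all $n\ge n_t$ and all $W\in\widehat{\mathcal{W}}^s$ with $|W|\ge\delta_t/3$, and (b)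 $\sum_{n\ge n_t}\sup_{W\in\widehat{\mathcal{W}}^s,|W|\ge\delta_t/3}e^{-nt\tau_{\min}}/L_n^{\delta_t}(W,t)<\infty$, and the time reversals of (a) and (b) both hold. SSP.2 holds at $t$ (with these $\delta_t,n_t$) if for every $W\in\widehat{\mathcal{W}}^s$ there exists $n_t^*(|W|,\delta_t)\in[n_t,\infty)$ with $S_n^{\delta_t}(W,t)/\mathcal{G}_n^{\delta_t}(W,t)\le1/2$ for all $n\ge n_t^*(|W|,\delta_t)$, and its time reversal also holds. Define $t_\infty=\sup\{t'\ge0:$ SSP.1 and SSP.2 hold for all $0\le t\le t'\}$; it is known that $t_\infty\ge\log\Lambda/(\tau_{\max}-\tau_{\min})>0$. *)

theory Defs
  imports "HOL-Analysis.Analysis"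
begin

text \<open>Abstract billiard data: phase space M, map T (and inverse branch Tinv used for
time reversal), free flight time tau, singular set S0 = {phi = +-pi/2}.\<close>

definition sing_set :: "'a set \<Rightarrow> ('a \<Rightarrow> 'a) \<Rightarrow> 'a set \<Rightarrow> nat \<Rightarrow> 'a set" where
  "sing_set M T S0 n = M \<inter> (\<Union>k\<in>{..n}. (T ^^ k) -` S0)"

definition comps :: "'a::topological_space set \<Rightarrow> ('a \<Rightarrow> 'a) \<Rightarrow> 'a set \<Rightarrow> nat \<Rightarrow> 'a set set" where
  "comps M T S0 n = {connected_component_set (M - sing_set M T S0 n) x | x. x \<in> M - sing_set M T S0 n}"

definition birk :: "('a \<Rightarrow> real) \<Rightarrow> ('a \<Rightarrow> 'a) \<Rightarrow> nat \<Rightarrow> 'a \<Rightarrow> real" where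
  "birk \<tau> T n x = (\<Sum>k<n. \<tau> ((T ^^ k) x))"

definition birk_rev :: "('a \<Rightarrow> real) \<Rightarrow> ('a \<Rightarrow> 'a) \<Rightarrow> nat \<Rightarrow> 'a \<Rightarrow> real" where
  "birk_rev \<tau> Tinv n x = (\<Sum>i\<in>{1..n}. \<tau> ((Tinv ^^ i) x))"

definition Qn :: "'a::topological_space set \<Rightarrow> ('a \<Rightarrow> 'a) \<Rightarrow> 'a set \<Rightarrow> ('a \<Rightarrow> real) \<Rightarrow> nat \<Rightarrow> real \<Rightarrow> real" where
  "Qn M T S0 \<tau> n t = (\<Sum>A\<in>comps M T S0 n. (SUP x\<in>A. exp (- t * birk \<tau> T n x)))"

definition Pstar :: "'a::topological_space set \<Rightarrow> ('a \<Rightarrow> 'a) \<Rightarrow> 'a set \<Rightarrow> ('a \<Rightarrow> real) \<Rightarrow> real \<Rightarrow> real" where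
  "Pstar M T S0 \<tau> t = lim (\<lambda>n. ln (Qn M T S0 \<tau> n t) / real n)"

definition Pstar_left_deriv :: "'a::topological_space set \<Rightarrow> ('a \<Rightarrow> 'a) \<Rightarrow> 'a set \<Rightarrow> ('a \<Rightarrow> real) \<Rightarrow> real \<Rightarrow> real" where
  "Pstar_left_deriv M T S0 \<tau> t =
     Lim (at_left t) (\<lambda>s. (Pstar M T S0 \<tau> t - Pstar M T S0 \<tau> s) / (t - s))"

definition csum :: "'a set set \<Rightarrow> (nat \<Rightarrow> 'a \<Rightarrow> real) \<Rightarrow> nat \<Rightarrow> real \<Rightarrow> real" where
  "csum C \<sigma> n t = (\<Sum>V\<in>C. (SUP x\<in>V. exp (- t * \<sigma> n x)))"

definition long_part :: "('a set \<Rightarrow> real) \<Rightarrow> real \<Rightarrow> 'a set set \<Rightarrow> 'a set set" where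
  "long_part len \<delta> C = {V\<in>C. \<delta> / 3 \<le> len V}"

definition short_part :: "('a set \<Rightarrow> real) \<Rightarrow> real \<Rightarrow> 'a set set \<Rightarrow> 'a set set" where
  "short_part len \<delta> C = {V\<in>C. len V < \<delta> / 3}"

text \<open>One half (stable or time-reversed/unstable) of SSP.1 (a),(b) and SSP.2 with
  given delta_t, n_t.  G delta n W is the family G_n^delta(W).\<close>
definition ssp_half ::
  "'a set set \<Rightarrow> ('a set \<Rightarrow> real) \<Rightarrow> (real \<Rightarrow> nat \<Rightarrow> 'a set \<Rightarrow> 'a set set)
   \<Rightarrow> (nat \<Rightarrow> 'a \<Rightarrow> real) \<Rightarrow> real \<Rightarrow> real \<Rightarrow> nat \<Rightarrow> real \<Rightarrow> bool" where
  "ssp_half Wcl len G \<sigma> \<tau>min \<delta> nt t \<longleftrightarrow>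
     (\<forall>n\<ge>nt. \<forall>W\<in>Wcl. \<delta> / 3 \<le> len W \<longrightarrow>
        csum (short_part len \<delta> (G \<delta> n W)) \<sigma> n t / csum (G \<delta> n W) \<sigma> n t \<le> 1/4)
   \<and> (\<Sum>k. (SUP W\<in>{W\<in>Wcl. \<delta> / 3 \<le> len W}.
          ereal (exp (- real (k + nt) * t * \<tau>min) / csum (long_part len \<delta> (G \<delta> (k + nt) W)) \<sigma> (k + nt) t)))
       < \<infinity>
   \<and> (\<exists>f :: real \<Rightarrow> nat. \<forall>W\<in>Wcl. nt \<le> f (len W) \<and>
        (\<forall>n\<ge>f (len W).
          csum (short_part len \<delta> (G \<delta> n W)) \<sigma> n t / csum (G \<delta> n W) \<sigma> n t \<le> 1/2))"

definition SSP ::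
  "'a set set \<Rightarrow> 'a set set \<Rightarrow> ('a set \<Rightarrow> real)
   \<Rightarrow> (real \<Rightarrow> nat \<Rightarrow> 'a set \<Rightarrow> 'a set set) \<Rightarrow> (real \<Rightarrow> nat \<Rightarrow> 'a set \<Rightarrow> 'a set set)
   \<Rightarrow> (nat \<Rightarrow> 'a \<Rightarrow> real) \<Rightarrow> (nat \<Rightarrow> 'a \<Rightarrow> real)
   \<Rightarrow> real \<Rightarrow> real \<Rightarrow> real \<Rightarrow> nat \<Rightarrow> real \<Rightarrow> bool" where
  "SSP Ws Wu len Gs Gu \<sigma>s \<sigma>u \<tau>min \<delta>0 \<delta>1 n1 t \<longleftrightarrow>
     (\<exists>N nt. \<delta>0 / 2 ^ N \<le> \<delta>1 \<and> n1 \<le> nt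
        \<and> ssp_half Ws len Gs \<sigma>s \<tau>min (\<delta>0 / 2 ^ N) nt t
        \<and> ssp_half Wu len Gu \<sigma>u \<tau>min (\<delta>0 / 2 ^ N) nt t)"

definition t_infty ::
  "'a set set \<Rightarrow> 'a set set \<Rightarrow> ('a set \<Rightarrow> real)
   \<Rightarrow> (real \<Rightarrow> nat \<Rightarrow> 'a set \<Rightarrow> 'a set set) \<Rightarrow> (real \<Rightarrow> nat \<Rightarrow> 'a set \<Rightarrow> 'a set set)
   \<Rightarrow> (nat \<Rightarrow> 'a \<Rightarrow> real) \<Rightarrow> (nat \<Rightarrow> 'a \<Rightarrow> real)
   \<Rightarrow> real \<Rightarrow> real \<Rightarrow> real \<Rightarrow> nat \<Rightarrow> ereal" where
  "t_infty Ws Wu len Gs Gu \<sigma>s \<sigma>u \<tau>min \<delta>0 \<delta>1 n1 =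
     Sup (ereal ` {t'. 0 \<le> t' \<and> (\<forall>t\<in>{0..t'}. SSP Ws Wu len Gs Gu \<sigma>s \<sigma>u \<tau>min \<delta>0 \<delta>1 n1 t)})"

end

theory Submission
  imports Defs
begin

text \<open>With \<open>D = |P'\<^sub>*,\<^sub>-(t)| \<in> [\<tau>min, \<tau>max]\<close> and \<open>c = (log \<theta>0)/2 \<in> (-\<tau>min/2, 0)\<close> we have
  \<open>s\<^sub>*(t) = t D/(D + c)\<close>. Since \<open>c < 0\<close>, the factor \<open>D/(D + c)\<close> decreases in \<open>D\<close>, so it is
  at least \<open>r = \<tau>max/(\<tau>max + c) > 1\<close> uniformly in \<open>t\<close>; any \<open>t\<^sub>* \<in> (t\<^sub>\<infinity>/r, t\<^sub>\<infinity>)\<close> then works.\<close>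

lemma ratio_shift_antimono:
  fixes c D D' :: real
  assumes "c < 0" "0 < D + c" "D \<le> D'"
  shows "D' / (D' + c) \<le> D / (D + c)"
proof -
  have "D' * c \<le> D * c"
    using assms by (simp add: mult_right_mono_neg)
  then have "D' * (D + c) \<le> D * (D' + c)"
    by (simp add: algebra_simps)
  then show ?thesis
    using assms by (simp add: field_simps)
qed

lemma exists_below_with_shifted_ratio_above:
  fixes t0 Dmin Dmax c :: real
  assumes "0 < t0" "c < 0" "0 < Dmin + c" "Dmin \<le> Dmax"
  shows "\<exists>t. 0 < t \<and> t < t0 \<and> (\<forall>D\<in>{Dmin..Dmax}. t0 < t * D / (D + c))"
proof -
  define r where "r = Dmax / (Dmax + c)"
  have "0 < Dmax + c"
    using assms by linarith
  then have "1 < r"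
    using assms by (simp add: r_def field_simps)
  define t where "t = t0 * (1 + r) / (2 * r)"
  have "0 < t" "t < t0" "t0 < t * r"
    using \<open>0 < t0\<close> \<open>1 < r\<close> by (simp_all add: t_def field_simps add_pos_pos)
  moreover have "t0 < t * D / (D + c)" if "D \<in> {Dmin..Dmax}" for D
  proof -
    have "r \<le> D / (D + c)"
      unfolding r_def using that assms by (intro ratio_shift_antimono) auto
    then have "t * r \<le> t * (D / (D + c))"
      using \<open>0 < t\<close> by (intro mult_left_mono) auto
    then show ?thesis
      using \<open>t0 < t * r\<close> by simp
  qed
  ultimately show ?thesis
    by blast
qed

lemma Pstar_left_deriv_eqI:
  assumes "((\<lambda>s. (Pstar M T S0 \<tau> t - Pstar M T S0 \<tau> s) / (t - s)) \<longlongrightarrow> d) (at_left t)"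
  shows "Pstar_left_deriv M T S0 \<tau> t = d"
  unfolding Pstar_left_deriv_def
  using assms by (intro tendsto_Lim) (simp_all add: trivial_limit_at_left_real)

theorem lemma4p1:
  fixes M :: "'a::topological_space set" and T Tinv :: "'a \<Rightarrow> 'a"
    and \<tau> :: "'a \<Rightarrow> real" and S0 :: "'a set"
    and Ws Wu :: "'a set set" and len :: "'a set \<Rightarrow> real"
    and Gs Gu :: "real \<Rightarrow> nat \<Rightarrow> 'a set \<Rightarrow> 'a set set"
    and \<tau>min \<tau>max \<delta>0 \<delta>1 \<theta>0 :: real and N1 n1 :: nat
  assumes M_ne: "M \<noteq> {}"
    and bdd: "bdd_below (\<tau> ` M)" "bdd_above (\<tau> ` M)"
    and tmin: "\<tau>min = Inf (\<tau> ` M)" and tmax: "\<tau>max = Sup (\<tau> ` M)"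
    and tmin_pos: "0 < \<tau>min"
    and d0: "0 < \<delta>0" and d1: "\<delta>1 = \<delta>0 / 2 ^ N1" "\<delta>1 < \<delta>0"
    and n1: "\<forall>W\<in>Ws. \<delta>1 / 3 \<le> len W \<longrightarrow> (\<forall>n\<ge>n1.
              real (card (long_part len \<delta>1 (Gs \<delta>1 n W))) \<ge> 2/3 * real (card (Gs \<delta>1 n W)))"
    and deriv: "\<forall>t>0. \<exists>d. ((\<lambda>s. (Pstar M T S0 \<tau> t - Pstar M T S0 \<tau> s) / (t - s)) \<longlongrightarrow> d) (at_left t)
                    \<and> - \<tau>max \<le> d \<and> d \<le> - \<tau>min"
    and tinf_pos: "0 < t_infty Ws Wu len Gs Gu (birk \<tau> T) (birk_rev \<tau> Tinv) \<tau>min \<delta>0 \<delta>1 n1"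
    and tinf_fin: "t_infty Ws Wu len Gs Gu (birk \<tau> T) (birk_rev \<tau> Tinv) \<tau>min \<delta>0 \<delta>1 n1 < \<infinity>"
    and th0: "exp (- \<tau>min) < \<theta>0" "\<theta>0 < exp (- \<tau>min / 2)"
  shows "\<exists>ts>0. ereal ts < t_infty Ws Wu len Gs Gu (birk \<tau> T) (birk_rev \<tau> Tinv) \<tau>min \<delta>0 \<delta>1 n1
           \<and> t_infty Ws Wu len Gs Gu (birk \<tau> T) (birk_rev \<tau> Tinv) \<tau>min \<delta>0 \<delta>1 n1
             < ereal (ts * \<bar>Pstar_left_deriv M T S0 \<tau> ts\<bar>
                      / (\<bar>Pstar_left_deriv M T S0 \<tau> ts\<bar> + ln \<theta>0 / 2))"
proof -
  let ?P' = "Pstar_left_deriv M T S0 \<tau>"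
  obtain t0 where t0: "t_infty Ws Wu len Gs Gu (birk \<tau> T) (birk_rev \<tau> Tinv) \<tau>min \<delta>0 \<delta>1 n1 = ereal t0"
    using tinf_pos tinf_fin by (cases "t_infty Ws Wu len Gs Gu (birk \<tau> T) (birk_rev \<tau> Tinv) \<tau>min \<delta>0 \<delta>1 n1") auto
  have "0 < t0"
    using tinf_pos t0 by simp
  have P'_bounds: "\<tau>min \<le> \<bar>?P' t\<bar> \<and> \<bar>?P' t\<bar> \<le> \<tau>max" if "0 < t" for t
    using deriv that tmin_pos Pstar_left_deriv_eqI by fastforce
  have ln_th0: "- \<tau>min < ln \<theta>0" "ln \<theta>0 < - \<tau>min / 2"
    using th0 by (metis exp_gt_zero exp_less_cancel_iff exp_ln less_trans)+
  obtain ts where "0 < ts" "ts < t0"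
      and above: "\<forall>D\<in>{\<tau>min..\<tau>max}. t0 < ts * D / (D + ln \<theta>0 / 2)"
    using exists_below_with_shifted_ratio_above[of t0 "ln \<theta>0 / 2" \<tau>min \<tau>max]
      \<open>0 < t0\<close> ln_th0 tmin_pos P'_bounds[of 1] by auto
  show ?thesis
    using \<open>0 < ts\<close> \<open>ts < t0\<close> above P'_bounds[OF \<open>0 < ts\<close>] t0 by auto
qed

end
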